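(* Let $f(x)=-\ln\Big(\sum_{i=1}^nw_ie^{-\|x-\mu_i\|^2/2}\Big)$ on $\mathbb{R}^d$, where $w_i>0$, $\sum_iw_i=1$, and $\|\mu_i\|\le D$ for all $i$. Then there exists a $\frac12$-strongly convex function $g:\mathbb{R}^d\to\mathbb{R}$ with $\sup_x|f(x)-g(x)|\le D^2$.
   Context: A function $h:\mathbb{R}^d\to\mathbb{R}$ is $\alpha$-strongly convex if for all $x,y$ and $t\in[0,1]$, $h(tx+(1-t)y)\le th(x)+(1-t)h(y)-\frac12\alpha t(1-t)\|x-y\|_2^2$. *)

theory Defs
  imports "HOL-Analysis.Analysis"
begin

definition strongly_convex_fun :: "real \<Rightarrow> ('a::real_inner \<Rightarrow> real) \<Rightarrow> bool" where
  "strongly_convex_fun \<alpha> h \<longleftrightarrow>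
     (\<forall>x y t. 0 \<le> t \<and> t \<le> 1 \<longrightarrow>
        h (t *\<^sub>R x + (1 - t) *\<^sub>R y)
          \<le> t * h x + (1 - t) * h y - (1/2) * \<alpha> * t * (1 - t) * (norm (x - y))\<^sup>2)"

end

theory Submission
  imports Defs
begin

text \<open>Completing the square, \<open>\<bar>x\<bar>\<^sup>2/2 - f\<close> is a log-sum-exp of the affine functions
  \<open>\<langle>x, \<mu>\<^sub>i\<rangle> - \<bar>\<mu>\<^sub>i\<bar>\<^sup>2/2\<close>, hence its decrease is \<open>D\<close>-Lipschitz. The inf-convolution
  \<open>e\<close> of this function \<open>h\<close> with \<open>\<bar>\<cdot>\<bar>\<^sup>2/4\<close> lies between \<open>h - D\<^sup>2\<close> and \<open>h\<close>, and it is
  semiconcave: \<open>e - \<bar>\<cdot>\<bar>\<^sup>2/4\<close> is an infimum of affine functions. Thus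
  \<open>g = \<bar>\<cdot>\<bar>\<^sup>2/2 - e\<close> is \<open>1/2\<close>-strongly convex and \<open>f - g = e - h\<close>.\<close>

lemma norm_convex_combination_power2:
  fixes x y :: "'a::real_inner"
  shows "(norm (t *\<^sub>R x + (1 - t) *\<^sub>R y))\<^sup>2
      = t * (norm x)\<^sup>2 + (1 - t) * (norm y)\<^sup>2 - t * (1 - t) * (norm (x - y))\<^sup>2"
  unfolding power2_norm_eq_inner
  by (simp add: inner_simps algebra_simps inner_commute power2_eq_square)

lemma strongly_convex_fun_quadratic_minus_semiconcave:
  fixes e :: "'a::real_inner \<Rightarrow> real"
  assumes semiconcave: "\<And>x y t. 0 \<le> t \<Longrightarrow> t \<le> 1 \<Longrightarrow>
      t * e x + (1 - t) * e y - c * t * (1 - t) * (norm (x - y))\<^sup>2 \<le> e (t *\<^sub>R x + (1 - t) *\<^sub>R y)"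
  shows "strongly_convex_fun (2 * (a - c)) (\<lambda>x. a * (norm x)\<^sup>2 - e x)"
  unfolding strongly_convex_fun_def
proof (intro allI impI)
  fix x y :: 'a and t :: real
  assume "0 \<le> t \<and> t \<le> 1"
  then have "t * e x + (1 - t) * e y - c * t * (1 - t) * (norm (x - y))\<^sup>2
      \<le> e (t *\<^sub>R x + (1 - t) *\<^sub>R y)"
    using semiconcave by blast
  then show "a * (norm (t *\<^sub>R x + (1 - t) *\<^sub>R y))\<^sup>2 - e (t *\<^sub>R x + (1 - t) *\<^sub>R y)
      \<le> t * (a * (norm x)\<^sup>2 - e x) + (1 - t) * (a * (norm y)\<^sup>2 - e y)
         - 1 / 2 * (2 * (a - c)) * t * (1 - t) * (norm (x - y))\<^sup>2"
    unfolding norm_convex_combination_power2 by (simp add: algebra_simps)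
qed

definition moreau_envelope :: "real \<Rightarrow> ('a::real_normed_vector \<Rightarrow> real) \<Rightarrow> 'a \<Rightarrow> real" where
  "moreau_envelope c h x = (INF u. h u + c * (norm (x - u))\<^sup>2)"

lemma moreau_envelope_le:
  assumes "bdd_below (range (\<lambda>u. h u + c * (norm (x - u))\<^sup>2))"
  shows "moreau_envelope c h x \<le> h u + c * (norm (x - u))\<^sup>2"
  unfolding moreau_envelope_def using assms by (intro cInf_lower) auto

lemma moreau_envelope_greatest:
  assumes "\<And>u. m \<le> h u + c * (norm (x - u))\<^sup>2"
  shows "m \<le> moreau_envelope c h x"
  unfolding moreau_envelope_def using assms by (intro cInf_greatest) auto

lemma moreau_envelope_semiconcave:
  fixes h :: "'a::real_inner \<Rightarrow> real"
  assumes bdd: "\<And>x. bdd_below (range (\<lambda>u. h u + c * (norm (x - u))\<^sup>2))"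
    and t: "0 \<le> t" "t \<le> 1"
  shows "t * moreau_envelope c h x + (1 - t) * moreau_envelope c h y
           - c * t * (1 - t) * (norm (x - y))\<^sup>2
         \<le> moreau_envelope c h (t *\<^sub>R x + (1 - t) *\<^sub>R y)"
proof (rule moreau_envelope_greatest)
  fix u
  have shift: "t *\<^sub>R x + (1 - t) *\<^sub>R y - u = t *\<^sub>R (x - u) + (1 - t) *\<^sub>R (y - u)"
    by (simp add: algebra_simps)
  have norm_shift: "(norm (t *\<^sub>R x + (1 - t) *\<^sub>R y - u))\<^sup>2
      = t * (norm (x - u))\<^sup>2 + (1 - t) * (norm (y - u))\<^sup>2 - t * (1 - t) * (norm (x - y))\<^sup>2"
    unfolding shift norm_convex_combination_power2 by simp
  have "t * moreau_envelope c h x \<le> t * (h u + c * (norm (x - u))\<^sup>2)"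
    using t moreau_envelope_le[OF bdd] by (simp add: mult_left_mono)
  moreover have "(1 - t) * moreau_envelope c h y \<le> (1 - t) * (h u + c * (norm (y - u))\<^sup>2)"
    using t moreau_envelope_le[OF bdd] by (simp add: mult_left_mono)
  moreover have "t * (h u + c * (norm (x - u))\<^sup>2) + (1 - t) * (h u + c * (norm (y - u))\<^sup>2)
      - c * t * (1 - t) * (norm (x - y))\<^sup>2 = h u + c * (norm (t *\<^sub>R x + (1 - t) *\<^sub>R y - u))\<^sup>2"
    unfolding norm_shift by (simp add: algebra_simps)
  ultimately show "t * moreau_envelope c h x + (1 - t) * moreau_envelope c h y
      - c * t * (1 - t) * (norm (x - y))\<^sup>2 \<le> h u + c * (norm (t *\<^sub>R x + (1 - t) *\<^sub>R y - u))\<^sup>2"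
    by linarith
qed

lemma lower_lipschitz_add_quadratic_ge:
  fixes h :: "'a::real_normed_vector \<Rightarrow> real"
  assumes "c > 0" and "h x - L * norm (u - x) \<le> h u"
  shows "h x - L\<^sup>2 / (4 * c) \<le> h u + c * (norm (x - u))\<^sup>2"
proof -
  have "0 \<le> (2 * c * norm (x - u) - L)\<^sup>2 / (4 * c)"
    using \<open>c > 0\<close> by simp
  also have "\<dots> = c * (norm (x - u))\<^sup>2 - L * norm (x - u) + L\<^sup>2 / (4 * c)"
    using \<open>c > 0\<close> by (simp add: power2_eq_square field_simps)
  finally show ?thesis
    using assms(2) by (simp add: norm_minus_commute)
qed

lemma bdd_below_moreau_envelope_range:
  fixes h :: "'a::real_normed_vector \<Rightarrow> real"
  assumes "c > 0" and lip: "\<And>u. h x - L * norm (u - x) \<le> h u"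
  shows "bdd_below (range (\<lambda>u. h u + c * (norm (x - u))\<^sup>2))"
  using lower_lipschitz_add_quadratic_ge[where h = h and x = x, OF \<open>c > 0\<close> lip]
  by (intro bdd_belowI2)

lemma moreau_envelope_bounds:
  fixes h :: "'a::real_normed_vector \<Rightarrow> real"
  assumes "c > 0" and lip: "\<And>u. h x - L * norm (u - x) \<le> h u"
  shows "h x - L\<^sup>2 / (4 * c) \<le> moreau_envelope c h x" and "moreau_envelope c h x \<le> h x"
proof -
  show "h x - L\<^sup>2 / (4 * c) \<le> moreau_envelope c h x"
    by (intro moreau_envelope_greatest lower_lipschitz_add_quadratic_ge \<open>c > 0\<close> lip)
  from moreau_envelope_le[OF bdd_below_moreau_envelope_range[OF assms], of x]
  show "moreau_envelope c h x \<le> h x"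
    by simp
qed

lemma ln_sum_exp_affine_lower_lipschitz:
  fixes \<mu> :: "'i \<Rightarrow> 'a::real_inner"
  assumes "finite I" "I \<noteq> {}" and w_pos: "\<forall>i\<in>I. 0 < w i" and mu_bd: "\<forall>i\<in>I. norm (\<mu> i) \<le> L"
  shows "ln (\<Sum>i\<in>I. w i * exp (inner x (\<mu> i) + b i)) - L * norm (u - x)
      \<le> ln (\<Sum>i\<in>I. w i * exp (inner u (\<mu> i) + b i))"
proof -
  define S where "S v = (\<Sum>i\<in>I. w i * exp (inner v (\<mu> i) + b i))" for v
  have S_pos: "0 < S v" for v
    unfolding S_def using assms by (intro sum_pos) auto
  have term_ge: "exp (inner x (\<mu> i) + b i) * exp (- L * norm (u - x)) \<le> exp (inner u (\<mu> i) + b i)"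
    if "i \<in> I" for i
  proof -
    have "\<bar>inner (u - x) (\<mu> i)\<bar> \<le> norm (u - x) * L"
      using Cauchy_Schwarz_ineq2[of "u - x" "\<mu> i"] mu_bd that
      by (meson mult_left_mono norm_ge_zero order_trans)
    then have "inner x (\<mu> i) + b i - L * norm (u - x) \<le> inner u (\<mu> i) + b i"
      by (simp add: inner_diff_left algebra_simps)
    then show ?thesis
      by (simp add: exp_add[symmetric])
  qed
  have "S x * exp (- L * norm (u - x)) \<le> S u"
    unfolding S_def sum_distrib_right
    using term_ge w_pos by (intro sum_mono) (simp add: mult.assoc mult_left_mono less_imp_le)
  then have "ln (S x * exp (- L * norm (u - x))) \<le> ln (S u)"
    using S_pos by (simp add: ln_le_cancel_iff)
  then show ?thesis
    using S_pos[of x] by (simp add: S_def ln_mult)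
qed

lemma ln_gaussian_mixture_complete_square:
  fixes \<mu> :: "'i \<Rightarrow> 'a::real_inner"
  assumes "finite I" "I \<noteq> {}" and w_pos: "\<forall>i\<in>I. 0 < w i"
  shows "(norm x)\<^sup>2 / 2 + ln (\<Sum>i\<in>I. w i * exp (- (norm (x - \<mu> i))\<^sup>2 / 2))
      = ln (\<Sum>i\<in>I. w i * exp (inner x (\<mu> i) - (norm (\<mu> i))\<^sup>2 / 2))"
proof -
  have square: "(norm x)\<^sup>2 / 2 + - (norm (x - \<mu> i))\<^sup>2 / 2 = inner x (\<mu> i) - (norm (\<mu> i))\<^sup>2 / 2" for i
    by (simp add: power2_norm_eq_inner inner_simps inner_commute field_simps)
  have "0 < (\<Sum>i\<in>I. w i * exp (- (norm (x - \<mu> i))\<^sup>2 / 2))"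
    using assms by (intro sum_pos) auto
  then have "(norm x)\<^sup>2 / 2 + ln (\<Sum>i\<in>I. w i * exp (- (norm (x - \<mu> i))\<^sup>2 / 2))
      = ln (exp ((norm x)\<^sup>2 / 2) * (\<Sum>i\<in>I. w i * exp (- (norm (x - \<mu> i))\<^sup>2 / 2)))"
    by (simp add: ln_mult)
  also have "\<dots> = ln (\<Sum>i\<in>I. w i * exp ((norm x)\<^sup>2 / 2 + - (norm (x - \<mu> i))\<^sup>2 / 2))"
    by (simp only: sum_distrib_left exp_add mult.left_commute)
  finally show ?thesis
    by (simp only: square)
qed

theorem mainTheorem10:
  fixes n :: nat and w :: "nat \<Rightarrow> real" and \<mu> :: "nat \<Rightarrow> real ^ 'd" and D :: real
    and f :: "real ^ 'd \<Rightarrow> real"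
  assumes w_pos: "\<forall>i<n. w i > 0"
    and w_sum: "(\<Sum>i<n. w i) = 1"
    and mu_bd: "\<forall>i<n. norm (\<mu> i) \<le> D"
    and f_def: "\<forall>x. f x = - ln (\<Sum>i<n. w i * exp (- (norm (x - \<mu> i))\<^sup>2 / 2))"
  shows "\<exists>g :: real ^ 'd \<Rightarrow> real. strongly_convex_fun (1/2) g \<and>
           (\<forall>x. \<bar>f x - g x\<bar> \<le> D\<^sup>2)"
proof -
  define h where "h x = (norm x)\<^sup>2 / 2 - f x" for x
  define e where "e = moreau_envelope (1/4) h"
  have nonempty: "{..<n} \<noteq> {}"
    using w_sum by auto
  have h_eq: "h x = ln (\<Sum>i<n. w i * exp (inner x (\<mu> i) - (norm (\<mu> i))\<^sup>2 / 2))" for x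
  proof -
    have "h x = (norm x)\<^sup>2 / 2 + ln (\<Sum>i<n. w i * exp (- (norm (x - \<mu> i))\<^sup>2 / 2))"
      by (simp add: h_def f_def)
    also have "\<dots> = ln (\<Sum>i<n. w i * exp (inner x (\<mu> i) - (norm (\<mu> i))\<^sup>2 / 2))"
      by (rule ln_gaussian_mixture_complete_square) (use nonempty w_pos in auto)
    finally show ?thesis .
  qed
  have lip: "h x - D * norm (u - x) \<le> h u" for x u
    unfolding h_eq
    using ln_sum_exp_affine_lower_lipschitz[OF finite_lessThan nonempty,
        where w = w and \<mu> = \<mu> and L = D and b = "\<lambda>i. - (norm (\<mu> i))\<^sup>2 / 2"] w_pos mu_bd
    by simp
  have "bdd_below (range (\<lambda>u. h u + 1/4 * (norm (x - u))\<^sup>2))" for x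
    by (rule bdd_below_moreau_envelope_range) (use lip in auto)
  then have "strongly_convex_fun (2 * (1/2 - 1/4)) (\<lambda>x. (1/2) * (norm x)\<^sup>2 - e x)"
    unfolding e_def
    by (intro strongly_convex_fun_quadratic_minus_semiconcave moreau_envelope_semiconcave)
  moreover have "\<bar>f x - ((1/2) * (norm x)\<^sup>2 - e x)\<bar> \<le> D\<^sup>2" for x
    using moreau_envelope_bounds[of "1/4" h x D] lip unfolding e_def h_def by auto
  ultimately show ?thesis
    by (intro exI[of _ "\<lambda>x. (1/2) * (norm x)\<^sup>2 - e x"]) auto
qed

end
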